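(* Let $\mathbb{K}$ be a field and let $\mathcal{L}=\{L_1,\ldots,L_d\}$ be a configuration of $d$ mutually distinct lines in $\mathbb{P}^2(\mathbb{K})$, with set of singular points $\{P_1,\ldots,P_s\}$ (points lying on at least two lines of $\mathcal{L}$), where $P_i$ has multiplicity $m_i$ (the number of lines of $\mathcal{L}$ through $P_i$), ordered so that $m_1\ge m_2\ge\cdots\ge m_s$. Then $$m_1+\cdots+m_r\le d+\binom{r}{2}\quad\text{for } r=1,\ldots,s.$$ In particular: (a) if $s\ge 3$ then $m_1+m_2+m_3\le d+3$; (b) if $s\ge 4$ then $m_1+m_2+m_3+m_4\le d+6$. *)

theory Defs
  imports Main
begin

type_synonym 'a vec3 = "'a \<times> 'a \<times> 'a"

definition scale3 :: "'a::field \<Rightarrow> 'a vec3 \<Rightarrow> 'a vec3" where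
  "scale3 c v = (c * fst v, c * fst (snd v), c * snd (snd v))"

definition dot3 :: "'a::field vec3 \<Rightarrow> 'a vec3 \<Rightarrow> 'a" where
  "dot3 v w = fst v * fst w + fst (snd v) * fst (snd w) + snd (snd v) * snd (snd w)"

definition pclass :: "'a::field vec3 \<Rightarrow> 'a vec3 set" where
  "pclass v = {scale3 c v | c. c \<noteq> 0}"

text \<open>Points of P^2(K); lines of P^2(K) are likewise classes of nonzero linear forms.\<close>
definition proj_points :: "'a::field vec3 set set" where
  "proj_points = {pclass v | v. v \<noteq> (0, 0, 0)}"

definition proj_lines :: "'a::field vec3 set set" where
  "proj_lines = {pclass w | w. w \<noteq> (0, 0, 0)}"

text \<open>Incidence: point P lies on line L (well defined on classes).\<close>
definition incident :: "'a::field vec3 set \<Rightarrow> 'a vec3 set \<Rightarrow> bool" where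
  "incident P L \<longleftrightarrow> (\<exists>v\<in>P. \<exists>w\<in>L. dot3 v w = 0)"

definition mult :: "'a::field vec3 set set \<Rightarrow> 'a vec3 set \<Rightarrow> nat" where
  "mult Ls P = card {L \<in> Ls. incident P L}"

definition singular_points :: "'a::field vec3 set set \<Rightarrow> 'a vec3 set set" where
  "singular_points Ls = {P \<in> proj_points. mult Ls P \<ge> 2}"

end

theory Submission
  imports Defs
begin

text \<open>
  Two distinct points of the projective plane lie on at most one common line, so the line
  pencils through distinct points pairwise share at most one line. Hence for any \<open>r\<close>
  distinct points the pencils, counted with multiplicity, overcount their union (a set of at
  most \<open>d\<close> lines) by at most the number \<open>r choose 2\<close> of pairs.
\<close>

definition cross3 :: "'a::field vec3 \<Rightarrow> 'a vec3 \<Rightarrow> 'a vec3" where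
  "cross3 a b = (fst (snd a) * snd (snd b) - snd (snd a) * fst (snd b),
                 snd (snd a) * fst b - fst a * snd (snd b),
                 fst a * fst (snd b) - fst (snd a) * fst b)"

lemma cross3_eq_zero_imp_scale3:
  fixes a b :: "'a::field vec3"
  assumes "a \<noteq> (0, 0, 0)" and "cross3 a b = (0, 0, 0)"
  shows "\<exists>c. b = scale3 c a"
proof -
  obtain a1 a2 a3 where a: "a = (a1, a2, a3)" by (cases a)
  obtain b1 b2 b3 where b: "b = (b1, b2, b3)" by (cases b)
  have e1: "a2 * b3 = a3 * b2" and e2: "a3 * b1 = a1 * b3" and e3: "a1 * b2 = a2 * b1"
    using assms(2) by (auto simp: cross3_def a b)
  consider "a1 \<noteq> 0" | "a1 = 0" "a2 \<noteq> 0" | "a1 = 0" "a2 = 0" "a3 \<noteq> 0"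
    using assms(1) a by blast
  then show ?thesis
  proof cases
    case 1
    with e2 e3 have "b = scale3 (b1 / a1) a" by (simp add: scale3_def a b field_simps)
    then show ?thesis ..
  next
    case 2
    with e1 e3 have "b = scale3 (b2 / a2) a" by (simp add: scale3_def a b field_simps)
    then show ?thesis ..
  next
    case 3
    with e1 e2 have "b = scale3 (b3 / a3) a" by (simp add: scale3_def a b field_simps)
    then show ?thesis ..
  qed
qed

lemma cross3_cross3_eq_zero:
  fixes v v' w :: "'a::field vec3"
  assumes "dot3 v w = 0" and "dot3 v' w = 0"
  shows "cross3 w (cross3 v v') = (0, 0, 0)"
proof -
  obtain a1 a2 a3 b1 b2 b3 c1 c2 c3
    where vecs: "v = (a1, a2, a3)" "v' = (b1, b2, b3)" "w = (c1, c2, c3)"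
    by (cases v, cases v', cases w) auto
  from assms have "a1 * c1 + a2 * c2 + a3 * c3 = 0" "b1 * c1 + b2 * c2 + b3 * c3 = 0"
    by (simp_all add: dot3_def vecs)
  then show ?thesis
    by (simp add: cross3_def vecs) algebra
qed

lemma scale3_eq_zero_iff: "scale3 c (v::'a::field vec3) = (0, 0, 0) \<longleftrightarrow> c = 0 \<or> v = (0, 0, 0)"
  by (cases v) (auto simp: scale3_def)

lemma scale3_scale3: "scale3 c (scale3 c' v) = scale3 (c * c') v"
  by (simp add: scale3_def mult.assoc)

lemma scale3_one [simp]: "scale3 1 v = v"
  by (simp add: scale3_def)

lemma pclass_scale3:
  assumes "(k::'a::field) \<noteq> 0"
  shows "pclass (scale3 k v) = pclass v"
  unfolding pclass_def
proof (intro set_eqI iffI)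
  fix x assume "x \<in> {scale3 c (scale3 k v) |c. c \<noteq> 0}"
  with assms show "x \<in> {scale3 c v |c. c \<noteq> 0}" by (auto simp: scale3_scale3)
next
  fix x assume "x \<in> {scale3 c v |c. c \<noteq> 0}"
  then obtain c where "c \<noteq> 0" "x = scale3 (c / k) (scale3 k v)"
    using assms by (auto simp: scale3_scale3)
  with assms show "x \<in> {scale3 c (scale3 k v) |c. c \<noteq> 0}" by auto
qed

lemma self_in_pclass: "v \<in> pclass v"
  unfolding pclass_def by (intro CollectI exI[of _ 1]) simp

lemma dot3_scale3: "dot3 (scale3 c v) (scale3 c' w) = c * c' * dot3 v w"
  by (simp add: dot3_def scale3_def algebra_simps)

lemma incident_pclass_iff: "incident (pclass v) (pclass w) \<longleftrightarrow> dot3 v (w::'a::field vec3) = 0"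
proof
  show "incident (pclass v) (pclass w) \<Longrightarrow> dot3 v w = 0"
    unfolding incident_def pclass_def by (auto simp: dot3_scale3)
  show "dot3 v w = 0 \<Longrightarrow> incident (pclass v) (pclass w)"
    unfolding incident_def using self_in_pclass by blast
qed

text \<open>Both lines are represented by multiples of the cross product of the two points.\<close>

lemma pclass_eq_if_orthogonal_to_two_points:
  fixes v v' w w' :: "'a::field vec3"
  assumes "v \<noteq> (0, 0, 0)" "v' \<noteq> (0, 0, 0)" "w \<noteq> (0, 0, 0)" "w' \<noteq> (0, 0, 0)"
    and "pclass v \<noteq> pclass v'"
    and "dot3 v w = 0" "dot3 v' w = 0" "dot3 v w' = 0" "dot3 v' w' = 0"
  shows "pclass w = pclass w'"
proof -
  have nonzero: "cross3 v v' \<noteq> (0, 0, 0)"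
  proof
    assume "cross3 v v' = (0, 0, 0)"
    then obtain c where c: "v' = scale3 c v" using cross3_eq_zero_imp_scale3 assms(1) by blast
    with assms(2) have "c \<noteq> 0" by (auto simp: scale3_eq_zero_iff)
    with assms(5) c show False by (simp add: pclass_scale3)
  qed
  obtain c where c: "cross3 v v' = scale3 c w"
    using cross3_eq_zero_imp_scale3[OF assms(3) cross3_cross3_eq_zero[OF assms(6,7)]] by blast
  obtain c' where c': "cross3 v v' = scale3 c' w'"
    using cross3_eq_zero_imp_scale3[OF assms(4) cross3_cross3_eq_zero[OF assms(8,9)]] by blast
  have "c \<noteq> 0" using nonzero unfolding c by (simp add: scale3_eq_zero_iff)
  have "c' \<noteq> 0" using nonzero unfolding c' by (simp add: scale3_eq_zero_iff)
  have "w = scale3 (1 / c) (cross3 v v')"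
    using c \<open>c \<noteq> 0\<close> by (simp add: scale3_scale3)
  also have "\<dots> = scale3 (c' / c) w'"
    using c' by (simp add: scale3_scale3)
  finally show ?thesis
    using \<open>c \<noteq> 0\<close> \<open>c' \<noteq> 0\<close> by (simp add: pclass_scale3)
qed

lemma proj_line_through_two_points_unique:
  fixes P Q L L' :: "'a::field vec3 set"
  assumes "P \<in> proj_points" "Q \<in> proj_points" "P \<noteq> Q"
    and "L \<in> proj_lines" "L' \<in> proj_lines"
    and "incident P L" "incident Q L" "incident P L'" "incident Q L'"
  shows "L = L'"
proof -
  obtain v v' w w' where
    "v \<noteq> (0, 0, 0)" "P = pclass v" "v' \<noteq> (0, 0, 0)" "Q = pclass v'"
    "w \<noteq> (0, 0, 0)" "L = pclass w" "w' \<noteq> (0, 0, 0)" "L' = pclass w'"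
    using assms(1,2,4,5) unfolding proj_points_def proj_lines_def by blast
  with assms(3,6-9) show ?thesis
    using pclass_eq_if_orthogonal_to_two_points[of v v' w w'] by (simp add: incident_pclass_iff)
qed

lemma card_common_lines_le_one:
  assumes "Ls \<subseteq> proj_lines" "finite Ls"
    and "P \<in> proj_points" "Q \<in> proj_points" "P \<noteq> Q"
  shows "card ({L \<in> Ls. incident P L} \<inter> {L \<in> Ls. incident Q L}) \<le> 1"
  using assms proj_line_through_two_points_unique[OF assms(3-5)]
  by (auto simp: card_le_Suc0_iff_eq)

lemma sum_card_le_card_UN_plus_choose_two:
  fixes A :: "nat \<Rightarrow> 'b set"
  assumes "\<And>i. i < r \<Longrightarrow> finite (A i)"
    and "\<And>i j. i < r \<Longrightarrow> j < r \<Longrightarrow> i \<noteq> j \<Longrightarrow> card (A i \<inter> A j) \<le> 1"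
  shows "(\<Sum>i<r. card (A i)) \<le> card (\<Union>i<r. A i) + (r choose 2)"
  using assms
proof (induction r)
  case 0
  then show ?case by simp
next
  case (Suc r)
  let ?U = "\<Union>i<r. A i"
  have IH: "(\<Sum>i<r. card (A i)) \<le> card ?U + (r choose 2)"
    using Suc.prems by (intro Suc.IH) auto
  have "A r \<inter> ?U = (\<Union>i<r. A r \<inter> A i)" by blast
  then have "card (A r \<inter> ?U) = card (\<Union>i<r. A r \<inter> A i)" by simp
  also have "\<dots> \<le> (\<Sum>i<r. card (A r \<inter> A i))"
    by (rule card_UN_le) simp
  also have "\<dots> \<le> (\<Sum>i<r. 1)"
    using Suc.prems(2) by (intro sum_mono) auto
  finally have overlap: "card (A r \<inter> ?U) \<le> r" by simp
  have "card (A r \<union> ?U) + card (A r \<inter> ?U) = card (A r) + card ?U"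
    using Suc.prems(1) by (intro card_Un_Int[symmetric]) auto
  moreover have "(\<Union>i<Suc r. A i) = A r \<union> ?U" by (auto simp: lessThan_Suc)
  moreover have "(Suc r choose 2) = (r choose 2) + r" by (simp add: numeral_2_eq_2)
  ultimately show ?case using IH overlap by simp
qed

lemma sum_mult_le_card_plus_choose_two:
  assumes "Ls \<subseteq> proj_lines" "finite Ls"
    and "inj_on P {..<r}" "P ` {..<r} \<subseteq> proj_points"
  shows "(\<Sum>i<r. mult Ls (P i)) \<le> card Ls + (r choose 2)"
proof -
  define A where "A i = {L \<in> Ls. incident (P i) L}" for i
  have "(\<Sum>i<r. card (A i)) \<le> card (\<Union>i<r. A i) + (r choose 2)"
    using assms unfolding A_def
    by (intro sum_card_le_card_UN_plus_choose_two card_common_lines_le_one)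
      (auto dest: inj_onD)
  moreover have "card (\<Union>i<r. A i) \<le> card Ls"
    using assms(2) by (intro card_mono) (auto simp: A_def)
  ultimately show ?thesis by (simp add: A_def mult_def)
qed

theorem lemma2:
  fixes Ls :: "'a::field vec3 set set"
    and P :: "nat \<Rightarrow> 'a vec3 set"
    and d s :: nat
  assumes "Ls \<subseteq> proj_lines" and "finite Ls" and "card Ls = d"
    and "card (singular_points Ls) = s"
    and "bij_betw P {0..<s} (singular_points Ls)"
    and "\<And>i j. i \<le> j \<Longrightarrow> j < s \<Longrightarrow> mult Ls (P j) \<le> mult Ls (P i)"
  shows "(\<forall>r\<in>{1..s}. (\<Sum>i<r. mult Ls (P i)) \<le> d + (r choose 2))
     \<and> (s \<ge> 3 \<longrightarrow> mult Ls (P 0) + mult Ls (P 1) + mult Ls (P 2) \<le> d + 3)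
     \<and> (s \<ge> 4 \<longrightarrow> mult Ls (P 0) + mult Ls (P 1) + mult Ls (P 2) + mult Ls (P 3) \<le> d + 6)"
proof -
  have bound: "(\<Sum>i<r. mult Ls (P i)) \<le> d + (r choose 2)" if "r \<le> s" for r
  proof (rule sum_mult_le_card_plus_choose_two[OF assms(1,2), of P r, unfolded assms(3)])
    show "inj_on P {..<r}" "P ` {..<r} \<subseteq> proj_points"
      using assms(5) that unfolding bij_betw_def singular_points_def
      by (auto intro: inj_on_subset)
  qed
  show ?thesis
    using bound[of 3] bound[of 4] bound
    by (auto simp: eval_nat_numeral choose_two)
qed

end
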